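(* Let $\mu=1/2$, $e=(1/2,0)$, $s=(-1/2,0)$ and $$V(q)=-\frac{1}{2|q-e|}-\frac{1}{2|q-s|}-\frac12|q|^2,\qquad q\in\mathbb{R}^2\setminus\{e,s\}.$$ There exists $\epsilon>0$ with the following property. Let $\mathfrak{K}^b_{-2+\epsilon}$ be the bounded connected component of $\{q\in\mathbb{R}^2\setminus\{e,s\}: V(q)\le -2+\epsilon\}$ that contains $e$ and $s$ in its closure. Then every $q\in\mathfrak{K}^b_{-2+\epsilon}$ with $\frac{\partial V}{\partial q_2}(q)=0$ satisfies $q_2=0$.
   Context: For $\mu=1/2$ the origin is the collinear critical point $\ell_1$ of $V$ between the primaries, and $V(0)=-2$ is the first critical value. *)

theory Defs
  imports "HOL-Analysis.Analysis"
begin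

text \<open>Points of the plane are pairs (q1, q2); norm on real \<times> real is Euclidean.\<close>

definition prim_e :: "real \<times> real" where "prim_e = (1/2, 0)"
definition prim_s :: "real \<times> real" where "prim_s = (-1/2, 0)"

text \<open>Effective potential for mu = 1/2 (only meaningful off {e, s}).\<close>
definition Vpot :: "real \<times> real \<Rightarrow> real" where
  "Vpot q = - 1 / (2 * norm (q - prim_e)) - 1 / (2 * norm (q - prim_s)) - (1/2) * (norm q)\<^sup>2"

definition dV_dq2 :: "real \<times> real \<Rightarrow> real" where
  "dV_dq2 q = deriv (\<lambda>t. Vpot (fst q, t)) (snd q)"

definition sublevel :: "real \<Rightarrow> (real \<times> real) set" where
  "sublevel c = {q. q \<noteq> prim_e \<and> q \<noteq> prim_s \<and> Vpot q \<le> c}"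

definition bdd_comp :: "real \<Rightarrow> (real \<times> real) set \<Rightarrow> bool" where
  "bdd_comp c K \<longleftrightarrow> K \<in> components (sublevel c) \<and> bounded K
      \<and> prim_e \<in> closure K \<and> prim_s \<in> closure K"

end

theory Submission
  imports Defs
begin

(* Write r1 = |q - e| and r2 = |q - s|. The open segment between the primaries lies in {V \<le> -2},
   so the component through its midpoint has both primaries in its closure. On the unit circle
   r1^2 + r2^2 = 5/2 and r1 r2 \<ge> 3/4, which give 1/r1 + 1/r2 \<le> 8/3 and hence V \<ge> -11/6 > -2 + 1/10;
   so the circle separates, and every component with e in its closure lies in the unit disc.
   There dV/dq2 = q2 (1/(2 r1^3) + 1/(2 r2^3) - 1). If the bracket vanished, r1^3 and r2^3 would
   both be at least 1/2, forcing r1, r2 > 3/4 and again V \<ge> -11/6. *)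

lemma has_real_derivative_inverse_dist_snd:
  fixes p :: "real \<times> real"
  assumes "(a, t) \<noteq> p"
  shows "((\<lambda>s. 1 / norm ((a, s) - p)) has_real_derivative (snd p - t) / norm ((a, t) - p) ^ 3) (at t)"
proof -
  obtain p1 p2 where p: "p = (p1, p2)" by fastforce
  define d where "d s = (a - p1)^2 + (s - p2)^2" for s
  have norm_eq: "norm ((a, s) - p) = sqrt (d s)" for s
    by (simp add: p d_def norm_Pair)
  have d_pos: "d t > 0" using assms by (auto simp: p d_def sum_power2_gt_zero_iff)
  have "((\<lambda>s. 1 / sqrt (d s)) has_real_derivative (p2 - t) / sqrt (d t) ^ 3) (at t)"
    using d_pos unfolding d_def
    by (auto intro!: derivative_eq_intros simp: divide_simps power3_eq_cube power2_eq_square)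
  then show ?thesis unfolding norm_eq by (simp add: p)
qed

lemma dV_dq2_eq:
  assumes "q \<noteq> prim_e" "q \<noteq> prim_s"
  shows "dV_dq2 q = snd q * (1 / (2 * norm (q - prim_e) ^ 3) + 1 / (2 * norm (q - prim_s) ^ 3) - 1)"
proof -
  obtain a b where q: "q = (a, b)" by fastforce
  have Vpot_line: "Vpot (a, t) = - (1 / norm ((a, t) - prim_e)) / 2 - (1 / norm ((a, t) - prim_s)) / 2
      - (a^2 + t^2) / 2" for t
    by (simp add: Vpot_def norm_Pair)
  have e: "((\<lambda>t. 1 / norm ((a, t) - prim_e)) has_real_derivative - b / norm (q - prim_e) ^ 3) (at b)"
    using has_real_derivative_inverse_dist_snd[of a b prim_e] assms(1) by (simp add: q prim_e_def)
  have s: "((\<lambda>t. 1 / norm ((a, t) - prim_s)) has_real_derivative - b / norm (q - prim_s) ^ 3) (at b)"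
    using has_real_derivative_inverse_dist_snd[of a b prim_s] assms(2) by (simp add: q prim_s_def)
  have quadratic: "((\<lambda>t. (a^2 + t^2) / 2) has_real_derivative b) (at b)"
    by (auto intro!: derivative_eq_intros)
  have "((\<lambda>t. Vpot (a, t)) has_real_derivative
      - (- b / norm (q - prim_e) ^ 3) / 2 - (- b / norm (q - prim_s) ^ 3) / 2 - b) (at b)"
    unfolding Vpot_line
    by (intro DERIV_diff DERIV_cdivide DERIV_minus e s quadratic)
  then show ?thesis
    unfolding dV_dq2_def by (simp add: DERIV_imp_deriv q algebra_simps)
qed

lemma inverse_add_inverse_le_if_sum_squares:
  fixes u v :: real
  assumes "u > 0" "v > 0" "u^2 + v^2 = 5/2" "u * v \<ge> 3/4"
  shows "1 / u + 1 / v \<le> 8/3"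
proof -
  define p where "p = u * v"
  have "(u + v)^2 = 5/2 + 2 * p"
    using assms(3) by (simp add: p_def power2_eq_square algebra_simps)
  also have "\<dots> \<le> (8/3 * p)^2"
  proof -
    \<comment> \<open>(8/3 p)^2 - (5/2 + 2 p) = (4 p - 3) (32 p + 15) / 18\<close>
    have "(4 * p - 3) * (32 * p + 15) \<ge> 0"
      using assms(4) by (simp add: p_def)
    then show ?thesis by (simp add: power2_eq_square algebra_simps)
  qed
  finally have "u + v \<le> 8/3 * p"
    by (rule power2_le_imp_le) (use assms in \<open>simp add: p_def\<close>)
  then show ?thesis
    using assms by (simp add: p_def field_simps)
qed

lemma inverse_dist_sum_le_on_unit_sphere:
  assumes "norm q = 1"
  shows "1 / norm (q - prim_e) + 1 / norm (q - prim_s) \<le> 8/3"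
proof -
  obtain a b where q: "q = (a, b)" by fastforce
  have circle: "a^2 + b^2 = 1"
    using assms by (simp add: q norm_Pair)
  then have a_square: "a^2 \<le> 1"
    by (metis le_add_same_cancel1 zero_le_power2)
  then have a_abs: "\<bar>a\<bar> \<le> 1"
    by (simp add: abs_square_le_1)
  have "norm (q - prim_e)^2 = (a - 1/2)^2 + b^2" "norm (q - prim_s)^2 = (a + 1/2)^2 + b^2"
    by (simp_all add: q prim_e_def prim_s_def norm_Pair)
  then have u2: "norm (q - prim_e)^2 = 5/4 - a" and v2: "norm (q - prim_s)^2 = 5/4 + a"
    using circle by (simp_all add: power2_eq_square algebra_simps)
  have "(norm (q - prim_e) * norm (q - prim_s))^2 = (5/4 - a) * (5/4 + a)"
    by (simp add: power_mult_distrib u2 v2)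
  also have "\<dots> = 25/16 - a^2"
    by (simp add: power2_eq_square algebra_simps)
  also have "\<dots> \<ge> (3/4)^2"
    using a_square by (simp add: power2_eq_square)
  finally have "norm (q - prim_e) * norm (q - prim_s) \<ge> 3/4"
    by (rule power2_le_imp_le[OF _ zero_le_mult_iff[THEN iffD2]]) simp
  moreover have "norm (q - prim_e) > 0" "norm (q - prim_s) > 0"
    using u2 v2 a_abs by (auto simp: less_le)
  ultimately show ?thesis
    using u2 v2 by (intro inverse_add_inverse_le_if_sum_squares) auto
qed

lemma inverse_le_if_half_inverse_cube_le:
  fixes u :: real
  assumes "u > 0" "1 / (2 * u^3) \<le> 1"
  shows "1 / u \<le> 4/3"
proof -
  have "(3/4)^3 < u^3"
    using assms by (simp add: field_simps)
  then have "3/4 < u"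
    by (rule power_less_imp_less_base) (use assms in simp)
  then show ?thesis
    using assms by (simp add: field_simps)
qed

lemma Vpot_ge_if_inverse_dist_sum_le:
  assumes "norm q \<le> 1" "1 / norm (q - prim_e) + 1 / norm (q - prim_s) \<le> 8/3"
  shows "Vpot q \<ge> -11/6"
proof -
  have "(norm q)^2 \<le> 1"
    using assms(1) by (simp add: power_le_one)
  then show ?thesis
    using assms(2) by (simp add: Vpot_def)
qed

lemma Vpot_le_on_open_segment:
  assumes "q \<in> open_segment prim_s prim_e"
  shows "Vpot q \<le> -2"
proof -
  obtain x where x: "-1/2 < x" "x < 1/2" and q: "q = (x, 0)"
  proof -
    obtain u :: real where "0 < u" "u < 1" "q = (1 - u) *\<^sub>R prim_s + u *\<^sub>R prim_e"
      using assms by (auto simp: in_segment)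
    then show ?thesis
      by (intro that[of "u - 1/2"]) (auto simp: prim_e_def prim_s_def field_simps)
  qed
  define p where "p = (1/2 - x) * (1/2 + x)"
  have p_pos: "0 < p"
    using x by (simp add: p_def)
  have p_le: "p \<le> 1/4"
    by (simp add: p_def algebra_simps)
  have "2 \<le> 1 / (2 * p)"
    using p_pos p_le by (simp add: field_simps)
  also have "\<dots> = 1 / (2 * (1/2 - x)) + 1 / (2 * (1/2 + x))"
    using x by (simp add: p_def field_split_simps)
  finally have "2 \<le> 1 / (2 * (1/2 - x)) + 1 / (2 * (1/2 + x))" .
  moreover have "Vpot q = - (1 / (2 * (1/2 - x))) - 1 / (2 * (1/2 + x)) - x^2 / 2"
    using x by (simp add: Vpot_def q prim_e_def prim_s_def norm_Pair)
  ultimately show ?thesis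
    using zero_le_power2[of x] by linarith
qed

lemma connected_subset_ball_if_disjoint_sphere:
  fixes K :: "'a::real_normed_vector set"
  assumes "connected K" "K \<inter> ball a r \<noteq> {}" "K \<inter> sphere a r = {}"
  shows "K \<subseteq> ball a r"
proof (rule ccontr)
  assume "\<not> K \<subseteq> ball a r"
  then have "K \<inter> frontier (ball a r) \<noteq> {}"
    using assms(1,2) by (intro connected_Int_frontier) auto
  moreover obtain x where "x \<in> ball a r"
    using assms(2) by blast
  then have "r > 0"
    by (metis le_less_trans mem_ball zero_le_dist)
  ultimately show False
    using assms(3) by simp
qed

lemma sublevel_disjoint_unit_sphere:
  assumes "c < -11/6"
  shows "sublevel c \<inter> sphere 0 1 = {}"
proof -
  have "Vpot q \<ge> -11/6" if "norm q = 1" for q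
    using that inverse_dist_sum_le_on_unit_sphere by (intro Vpot_ge_if_inverse_dist_sum_le) auto
  then show ?thesis
    using assms by (force simp: sublevel_def)
qed

lemma component_subset_unit_ball:
  assumes "c < -11/6" "K \<in> components (sublevel c)" "K \<inter> ball 0 1 \<noteq> {}"
  shows "K \<subseteq> ball 0 1"
proof (rule connected_subset_ball_if_disjoint_sphere)
  show "connected K"
    using assms(2) by (rule in_components_connected)
  show "K \<inter> sphere 0 1 = {}"
    using in_components_subset[OF assms(2)] sublevel_disjoint_unit_sphere[OF assms(1)] by blast
qed (fact assms(3))

lemma bdd_comp_subset_unit_ball:
  assumes "c < -11/6" "bdd_comp c K"
  shows "K \<subseteq> ball 0 1"
proof -
  have K: "K \<in> components (sublevel c)" "prim_e \<in> closure K"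
    using assms(2) by (auto simp: bdd_comp_def)
  have "prim_e \<in> ball 0 1"
    by (simp add: prim_e_def norm_Pair)
  then have "K \<inter> ball 0 1 \<noteq> {}"
    using K(2) open_Int_closure_eq_empty[of "ball 0 1" K] by auto
  then show ?thesis
    using assms(1) K(1) by (rule component_subset_unit_ball[rotated -1])
qed

lemma bdd_comp_exists:
  assumes "-2 \<le> c" "c < -11/6"
  shows "\<exists>K. bdd_comp c K"
proof -
  define S where "S = open_segment prim_s prim_e"
  define K where "K = connected_component_set (sublevel c) 0"
  have S_sub: "S \<subseteq> sublevel c"
    using Vpot_le_on_open_segment assms(1)
    by (force simp: S_def sublevel_def open_segment_def prim_e_def prim_s_def)
  have "0 \<in> S"
    using midpoint_in_open_segment[of prim_s prim_e]
    by (simp add: S_def midpoint_def prim_e_def prim_s_def zero_prod_def)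
  have K: "K \<in> components (sublevel c)"
    using \<open>0 \<in> S\<close> S_sub unfolding K_def by (auto intro: componentsI)
  have "S \<subseteq> K"
    unfolding K_def using \<open>0 \<in> S\<close> _ S_sub
    by (rule connected_component_maximal) (simp add: S_def convex_connected)
  have "prim_e \<in> closure K" "prim_s \<in> closure K"
    using closure_mono[OF \<open>S \<subseteq> K\<close>] by (auto simp: S_def prim_e_def prim_s_def)
  moreover have "K \<subseteq> ball 0 1"
    using assms(2) K by (rule component_subset_unit_ball) (use \<open>0 \<in> S\<close> \<open>S \<subseteq> K\<close> in auto)
  ultimately show ?thesis
    using K bounded_subset[OF bounded_ball] unfolding bdd_comp_def by blast
qed

lemma snd_eq_0_if_dV_dq2_eq_0:
  assumes "c < -11/6" "q \<in> sublevel c" "norm q \<le> 1" "dV_dq2 q = 0"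
  shows "snd q = 0"
proof (rule ccontr)
  assume "snd q \<noteq> 0"
  have q: "q \<noteq> prim_e" "q \<noteq> prim_s" "Vpot q \<le> c"
    using assms(2) by (auto simp: sublevel_def)
  define u where "u = norm (q - prim_e)"
  define v where "v = norm (q - prim_s)"
  have uv_pos: "u > 0" "v > 0"
    using q by (simp_all add: u_def v_def)
  have "1 / (2 * u^3) + 1 / (2 * v^3) = 1"
    using dV_dq2_eq[OF q(1,2)] assms(4) \<open>snd q \<noteq> 0\<close> by (simp add: u_def v_def)
  moreover have "1 / (2 * u^3) > 0" "1 / (2 * v^3) > 0"
    using uv_pos by simp_all
  ultimately have "1 / (2 * u^3) \<le> 1" "1 / (2 * v^3) \<le> 1"
    by linarith+
  then have "1 / u \<le> 4/3" "1 / v \<le> 4/3"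
    using uv_pos inverse_le_if_half_inverse_cube_le by blast+
  then have "Vpot q \<ge> -11/6"
    using assms(3) by (intro Vpot_ge_if_inverse_dist_sum_le) (simp_all add: u_def v_def)
  then show False
    using q(3) assms(1) by simp
qed

theorem lemma4p1:
  shows "\<exists>\<epsilon>>0. (\<exists>K. bdd_comp (-2 + \<epsilon>) K) \<and>
           (\<forall>K. bdd_comp (-2 + \<epsilon>) K \<longrightarrow>
              (\<forall>q\<in>K. dV_dq2 q = 0 \<longrightarrow> snd q = 0))"
proof (intro exI[of _ "1/10"] conjI allI impI ballI)
  show "(1/10 :: real) > 0"
    by simp
  show "\<exists>K. bdd_comp (-2 + 1/10) K"
    by (rule bdd_comp_exists) simp_all
  fix K q
  assume K: "bdd_comp (-2 + 1/10) K" and "q \<in> K" "dV_dq2 q = 0"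
  moreover have "K \<subseteq> sublevel (-2 + 1/10)"
    using K in_components_subset unfolding bdd_comp_def by blast
  moreover have "K \<subseteq> ball 0 1"
    using K by (rule bdd_comp_subset_unit_ball[rotated]) simp
  ultimately show "snd q = 0"
    by (intro snd_eq_0_if_dV_dq2_eq_0[of "-2 + 1/10"]) auto
qed

end
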